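(* For a ternary cubic form $f$ the following are equivalent: (1) $\Delta=0$ and $F_{6u}\neq0$; (2) $f=a_0a_x^3+b_0b_x^3$ for some nonzero $a_0,b_0\in\mathbb C$ and linear forms $a_x,b_x$ with $\{a_x,b_x\}$ linearly independent; (3) $f=a_xb_xc_x$ for linear forms $a_x,b_x,c_x$ such that $\{a_x,b_x,c_x\}$ is linearly dependent but each pair from it is linearly independent.
   Context: Forms are homogeneous polynomials with complex coefficients in $x=(x_1,x_2,x_3)$; $u=(u_1,u_2,u_3)$ are indeterminates and $u_x=\sum u_ix_i$. The $n$-th transvectant is $J^n[f,g,h]=\big(\Omega^n(f(x)g(y)h(z))\big)|_{y=z=x}$, where $\Omega$ is the determinant of the operator matrix with rows $(\partial/\partial x_i)$, $(\partial/\partial y_i)$, $(\partial/\partial z_i)$, and $u$ is treated as constant. For a ternary cubic $f$: - $\Delta=\tfrac1{12}J^2[f,f,f]$ (the Hessian); - $\theta=\tfrac14J^2[f,f,u_x^2]$; - $F_{6u}=\tfrac1{3072}J^2[\theta,\theta,u_x^2]$ (a polynomial in $u$; "$F_{6u}\ne0$" means it is not the zero polynomial). *)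

theory Defs
  imports Complex_Main "HOL-Analysis.Finite_Cartesian_Product" "HOL-Analysis.Derivative" "HOL-Combinatorics.Permutations"
begin

text \<open>Ternary forms are represented as polynomial functions on complex 3-space
  (equivalent to polynomials since the field is infinite).\<close>

type_synonym form = "complex^3 \<Rightarrow> complex"

definition ternary_cubic :: "form \<Rightarrow> bool" where
  "ternary_cubic f \<longleftrightarrow> (\<exists>c :: nat \<Rightarrow> nat \<Rightarrow> complex.
     \<forall>x. f x = (\<Sum>i\<le>3. \<Sum>j\<le>3 - i. c i j * (x$1)^i * (x$2)^j * (x$3)^(3 - i - j)))"

definition lin :: "complex^3 \<Rightarrow> complex^3 \<Rightarrow> complex" where
  "lin a x = (\<Sum>i\<in>UNIV. a$i * x$i)"

definition pd :: "3 \<Rightarrow> form \<Rightarrow> form" where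
  "pd i f x = deriv (\<lambda>t. f (\<chi> j. if j = i then t else x$j)) (x$i)"

fun pds :: "3 list \<Rightarrow> form \<Rightarrow> form" where
  "pds [] f = f"
| "pds (i # is) f = pd i (pds is f)"

text \<open>n-th transvectant: Omega = sum over permutations s of sign s *
  d/dx_{s 1} d/dy_{s 2} d/dz_{s 3}; Omega^n applied to f(x)g(y)h(z),
  then y = z = x.\<close>
definition J :: "nat \<Rightarrow> form \<Rightarrow> form \<Rightarrow> form \<Rightarrow> form" where
  "J n f g h x = (\<Sum>ss\<in>Pi\<^sub>E {..<n} (\<lambda>_. {s::3\<Rightarrow>3. s permutes UNIV}).
      (\<Prod>k<n. of_int (sign (ss k))) *
      pds (map (\<lambda>k. ss k 1) [0..<n]) f x *
      pds (map (\<lambda>k. ss k 2) [0..<n]) g x *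
      pds (map (\<lambda>k. ss k 3) [0..<n]) h x)"

definition Hessian :: "form \<Rightarrow> form" where
  "Hessian f = (\<lambda>x. J 2 f f f x / 12)"

definition theta :: "form \<Rightarrow> complex^3 \<Rightarrow> form" where
  "theta f u = (\<lambda>x. J 2 f f (\<lambda>y. (lin u y)^2) x / 4)"

text \<open>F_{6u}, as a function of u (and formally x, on which it does not depend).\<close>
definition F6u :: "form \<Rightarrow> complex^3 \<Rightarrow> form" where
  "F6u f u = (\<lambda>x. J 2 (theta f u) (theta f u) (\<lambda>y. (lin u y)^2) x / 3072)"

definition lin_indep2 :: "complex^3 \<Rightarrow> complex^3 \<Rightarrow> bool" where
  "lin_indep2 a b \<longleftrightarrow> (\<forall>\<alpha> \<beta>. (\<forall>x. \<alpha> * lin a x + \<beta> * lin b x = 0) \<longrightarrow> \<alpha> = 0 \<and> \<beta> = 0)"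

definition lin_dep3 :: "complex^3 \<Rightarrow> complex^3 \<Rightarrow> complex^3 \<Rightarrow> bool" where
  "lin_dep3 a b c \<longleftrightarrow> (\<exists>\<alpha> \<beta> \<gamma>. (\<alpha>, \<beta>, \<gamma>) \<noteq> (0, 0, 0) \<and>
      (\<forall>x. \<alpha> * lin a x + \<beta> * lin b x + \<gamma> * lin c x = 0))"

end

theory Submission
  imports Defs "HOL-Analysis.Determinants" "HOL-Computational_Algebra.Fundamental_Theorem_Algebra"
begin

(* Write f x = T(x,x,x) with T a symmetric trilinear form. The Hessian matrix of f at x is
   6 T(x,-,-), and J^2[f,g,h] is the full polarisation of 6 det evaluated on the Hessian
   matrices of f, g, h.
   If f = g0 a^3 + g1 a^2 b + g2 a b^2 + g3 b^3 with a, b independent, every T(x,-,-) lies in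
   the span of a a', a b' + b a', b b', on which the polarised determinant vanishes; hence
   Delta = 0, and a direct computation gives F_6u = det(a,b,u)^6 disc(g)/16.
   Conversely, if Delta = 0, pick p with f p \<noteq> 0 and adapt coordinates to p: the vanishing of
   det T(w,-,-) for all w forces f = c z^3 + 3 l z n^2 + g n^3 for linear forms z, n, and
   F_6u \<noteq> 0 says that this binary cubic has nonzero discriminant, so it splits into three
   pairwise independent linear factors, all in the span of z and n.
   Finally, (2) and (3) are exchanged by a^3 + b^3 = (a + b)(a + w b)(a + w^2 b) and
   (X - w Y)^3 - (X - w^2 Y)^3 = 3 (w^2 - w) X Y (X + Y) for a primitive cube root of unity w. *)

section \<open>The second transvectant as a polarised determinant\<close>

definition alt3 :: "(3 \<Rightarrow> 3 \<Rightarrow> 3 \<Rightarrow> 'a::comm_ring_1) \<Rightarrow> 'a" where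
  "alt3 g = g 1 2 3 + g 2 3 1 + g 3 1 2 - g 1 3 2 - g 2 1 3 - g 3 2 1"

lemma sum_permutations_3_sign:
  "(\<Sum>p\<in>{p. p permutes (UNIV::3 set)}. of_int (sign p) * g (p 1) (p 2) (p 3)) = alt3 g"
proof -
  have f123: "finite {2::3, 3}" "1 \<notin> {2::3, 3}"
    by auto
  have f23: "finite {3::3}" "2 \<notin> {3::3}"
    by auto
  show ?thesis
    unfolding UNIV_3 sum_over_permutations_insert[OF f123] sum_over_permutations_insert[OF f23]
      permutes_sing
    by (simp add: alt3_def sign_swap_id permutation_swap_id sign_compose swap_id_eq algebra_simps)
qed

type_synonym 'a mat3 = "3 \<Rightarrow> 3 \<Rightarrow> 'a"

definition mixed_det :: "'a::comm_ring_1 mat3 \<Rightarrow> 'a mat3 \<Rightarrow> 'a mat3 \<Rightarrow> 'a" where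
  "mixed_det A B C = (\<Sum>s\<in>{p. p permutes (UNIV::3 set)}. \<Sum>t\<in>{p. p permutes (UNIV::3 set)}.
      of_int (sign s) * of_int (sign t) * A (s 1) (t 1) * B (s 2) (t 2) * C (s 3) (t 3))"

lemma mixed_det_alt3:
  "mixed_det A B C = alt3 (\<lambda>i1 i2 i3. alt3 (\<lambda>j1 j2 j3. A i1 j1 * B i2 j2 * C i3 j3))"
proof -
  have "mixed_det A B C = (\<Sum>s\<in>{p. p permutes (UNIV::3 set)}. of_int (sign s) *
      (\<Sum>t\<in>{p. p permutes (UNIV::3 set)}.
         of_int (sign t) * A (s 1) (t 1) * B (s 2) (t 2) * C (s 3) (t 3)))"
    unfolding mixed_det_def by (simp add: sum_distrib_left mult_ac)
  also have "\<dots> = (\<Sum>s\<in>{p. p permutes (UNIV::3 set)}. of_int (sign s) *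
      alt3 (\<lambda>j1 j2 j3. A (s 1) j1 * B (s 2) j2 * C (s 3) j3))"
    using sum_permutations_3_sign[of "\<lambda>j1 j2 j3. A _ j1 * B _ j2 * C _ j3"]
    by (simp add: mult.assoc)
  also have "\<dots> = alt3 (\<lambda>i1 i2 i3. alt3 (\<lambda>j1 j2 j3. A i1 j1 * B i2 j2 * C i3 j3))"
    by (rule sum_permutations_3_sign)
  finally show ?thesis .
qed

lemma sum_PiE_2:
  fixes S :: "'a set"
  shows "(\<Sum>ss\<in>Pi\<^sub>E {..<2::nat} (\<lambda>_. S). F (ss 0) (ss 1)) = (\<Sum>s\<in>S. \<Sum>t\<in>S. F s t :: 'b::comm_monoid_add)"
proof -
  define pair :: "'a \<times> 'a \<Rightarrow> nat \<Rightarrow> 'a"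
    where "pair = (\<lambda>(s, t) (k::nat). if k = 0 then s else if k = 1 then t else undefined)"
  have "bij_betw pair (S \<times> S) (Pi\<^sub>E {..<2} (\<lambda>_. S))"
    by (rule bij_betw_byWitness[where f' = "\<lambda>ss. (ss 0, ss 1)"])
      (auto simp: pair_def fun_eq_iff PiE_def extensional_def)
  then have "(\<Sum>ss\<in>Pi\<^sub>E {..<2::nat} (\<lambda>_. S). F (ss 0) (ss 1)) = (\<Sum>p\<in>S \<times> S. F (pair p 0) (pair p 1))"
    using sum.reindex_bij_betw[of pair _ _ "\<lambda>ss. F (ss 0) (ss 1)"] by simp
  also have "\<dots> = (\<Sum>s\<in>S. \<Sum>t\<in>S. F s t)"
    by (simp add: pair_def sum.cartesian_product case_prod_beta)
  finally show ?thesis .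
qed

definition hess :: "form \<Rightarrow> complex^3 \<Rightarrow> complex mat3" where
  "hess f x = (\<lambda>i j. pd i (pd j f) x)"

lemma J_2_eq_mixed_det: "J 2 f g h x = mixed_det (hess f x) (hess g x) (hess h x)"
  using sum_PiE_2[where F = "\<lambda>s t. of_int (sign s) * of_int (sign t) *
      hess f x (s 1) (t 1) * hess g x (s 2) (t 2) * hess h x (s 3) (t 3)"]
  unfolding J_def hess_def mixed_det_def
  by (simp add: numeral_2_eq_2 lessThan_Suc upt_rec mult_ac)

definition mat_add :: "'a::plus mat3 \<Rightarrow> 'a mat3 \<Rightarrow> 'a mat3" where
  "mat_add X Y = (\<lambda>i j. X i j + Y i j)"

definition mat_scale :: "'a::times \<Rightarrow> 'a mat3 \<Rightarrow> 'a mat3" where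
  "mat_scale c X = (\<lambda>i j. c * X i j)"

definition outer :: "'a::times^3 \<Rightarrow> 'a^3 \<Rightarrow> 'a mat3" where
  "outer a b = (\<lambda>i j. a$i * b$j)"

definition det3 :: "'a::comm_ring_1^3 \<Rightarrow> 'a^3 \<Rightarrow> 'a^3 \<Rightarrow> 'a" where
  "det3 a b c = alt3 (\<lambda>i j k. a$i * b$j * c$k)"

lemma mixed_det_add:
  "mixed_det (mat_add X Y) B C = mixed_det X B C + mixed_det Y B C"
  "mixed_det A (mat_add X Y) C = mixed_det A X C + mixed_det A Y C"
  "mixed_det A B (mat_add X Y) = mixed_det A B X + mixed_det A B Y"
  by (simp_all add: mixed_det_alt3 alt3_def mat_add_def algebra_simps)

lemma mixed_det_scale:
  "mixed_det (mat_scale c X) B C = c * mixed_det X B C"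
  "mixed_det A (mat_scale c X) C = c * mixed_det A X C"
  "mixed_det A B (mat_scale c X) = c * mixed_det A B X"
  by (simp_all add: mixed_det_alt3 alt3_def mat_scale_def algebra_simps)

lemma mixed_det_outer: "mixed_det (outer a b) (outer c d) (outer e f) = det3 a c e * det3 b d f"
  by (simp add: mixed_det_alt3 alt3_def outer_def det3_def algebra_simps)

lemma mixed_det_swap12: "mixed_det A B C = mixed_det B A C"
  by (simp add: mixed_det_alt3 alt3_def algebra_simps)

lemma mixed_det_diag: "mixed_det A A A = 6 * det (\<chi> i j. A i j)"
  by (simp add: mixed_det_alt3 alt3_def det_3 algebra_simps)

lemma det3_repeated: "det3 a a c = 0" "det3 a c a = 0" "det3 c a a = 0"
  by (simp_all add: det3_def alt3_def algebra_simps)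

lemma det3_swap12: "det3 b a c = - det3 a b c"
  by (simp add: det3_def alt3_def algebra_simps)

definition form1 :: "(3 \<Rightarrow> complex) \<Rightarrow> complex^3 \<Rightarrow> complex" where
  "form1 L x = (\<Sum>i\<in>UNIV. L i * x$i)"

definition form2 :: "complex mat3 \<Rightarrow> complex^3 \<Rightarrow> complex^3 \<Rightarrow> complex" where
  "form2 Q x y = (\<Sum>i\<in>UNIV. \<Sum>j\<in>UNIV. Q i j * x$i * y$j)"

definition form3 :: "(3 \<Rightarrow> 3 \<Rightarrow> 3 \<Rightarrow> complex) \<Rightarrow> complex^3 \<Rightarrow> complex^3 \<Rightarrow> complex^3 \<Rightarrow> complex" where
  "form3 T x y z = (\<Sum>i\<in>UNIV. \<Sum>j\<in>UNIV. \<Sum>k\<in>UNIV. T i j k * x$i * y$j * z$k)"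

definition sym2 :: "'a mat3 \<Rightarrow> bool" where
  "sym2 Q \<longleftrightarrow> (\<forall>i j. Q i j = Q j i)"

definition sym3 :: "(3 \<Rightarrow> 3 \<Rightarrow> 3 \<Rightarrow> 'a) \<Rightarrow> bool" where
  "sym3 T \<longleftrightarrow> (\<forall>i j k. T i j k = T j i k \<and> T i j k = T i k j)"

lemma form1_linear: "form1 L (x + s *s y) = form1 L x + s * form1 L y"
  by (simp add: form1_def algebra_simps sum.distrib sum_distrib_left)

lemma form2_linear:
  "form2 Q (x + y) z = form2 Q x z + form2 Q y z" "form2 Q x (y + z) = form2 Q x y + form2 Q x z"
  "form2 Q (s *s x) y = s * form2 Q x y" "form2 Q x (s *s y) = s * form2 Q x y"
  by (simp_all add: form2_def algebra_simps sum.distrib sum_distrib_left)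

lemma form3_linear:
  "form3 T (x + y) z w = form3 T x z w + form3 T y z w"
  "form3 T x (y + z) w = form3 T x y w + form3 T x z w"
  "form3 T x y (z + w) = form3 T x y z + form3 T x y w"
  "form3 T (s *s x) y z = s * form3 T x y z"
  "form3 T x (s *s y) z = s * form3 T x y z"
  "form3 T x y (s *s z) = s * form3 T x y z"
  by (simp_all add: form3_def algebra_simps sum.distrib sum_distrib_left)

lemma form2_sym:
  assumes "sym2 Q" shows "form2 Q x y = form2 Q y x"
proof -
  have "form2 Q y x = (\<Sum>j\<in>UNIV. \<Sum>i\<in>UNIV. Q i j * y$i * x$j)"
    unfolding form2_def by (rule sum.swap)
  also have "\<dots> = form2 Q x y"
    using assms unfolding form2_def sym2_def by (intro sum.cong refl) (metis mult.commute mult.left_commute)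
  finally show ?thesis by simp
qed

lemma form3_sym:
  assumes "sym3 T"
  shows form3_swap12: "form3 T x y z = form3 T y x z" and form3_swap23: "form3 T x y z = form3 T x z y"
proof -
  have "form3 T y x z = (\<Sum>j\<in>UNIV. \<Sum>i\<in>UNIV. \<Sum>k\<in>UNIV. T i j k * y$i * x$j * z$k)"
    unfolding form3_def by (rule sum.swap)
  also have "\<dots> = form3 T x y z"
    using assms unfolding form3_def sym3_def by (intro sum.cong refl) (metis mult.commute mult.left_commute)
  finally show "form3 T x y z = form3 T y x z" by simp
  have "form3 T x z y = (\<Sum>i\<in>UNIV. \<Sum>k\<in>UNIV. \<Sum>j\<in>UNIV. T i j k * x$i * z$j * y$k)"
    unfolding form3_def by (intro sum.cong refl sum.swap)
  also have "\<dots> = form3 T x y z"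
    using assms unfolding form3_def sym3_def by (intro sum.cong refl) (metis mult.commute mult.left_commute)
  finally show "form3 T x y z = form3 T x z y" by simp
qed

lemma form3_on_line:
  assumes "sym3 T"
  shows "form3 T (x + s *s e) (x + s *s e) (x + s *s e) =
    form3 T x x x + 3 * form3 T e x x * s + 3 * form3 T e e x * s^2 + form3 T e e e * s^3"
proof -
  have "form3 T x x e = form3 T e x x" "form3 T x e x = form3 T e x x"
    "form3 T x e e = form3 T e e x" "form3 T e x e = form3 T e e x"
    using form3_swap12[OF assms] form3_swap23[OF assms] by metis+
  then show ?thesis
    by (simp add: form3_linear power2_eq_square power3_eq_cube algebra_simps)
qed

lemma form2_on_line:
  assumes "sym2 Q"
  shows "form2 Q (x + s *s e) (x + s *s e) = form2 Q x x + 2 * form2 Q e x * s + form2 Q e e * s^2"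
  using form2_sym[OF assms, of x e] by (simp add: form2_linear power2_eq_square algebra_simps)

lemma form3_axis: "form3 T (axis l 1) x y = form2 (\<lambda>j k. T l j k) x y"
proof -
  have "form3 T (axis l 1) x y = (\<Sum>i\<in>UNIV. if i = l then (\<Sum>j\<in>UNIV. \<Sum>k\<in>UNIV. T l j k * x$j * y$k) else 0)"
    unfolding form3_def axis_def by (intro sum.cong refl) auto
  then show ?thesis by (simp add: form2_def)
qed

lemma form2_axis: "form2 Q (axis l 1) x = form1 (Q l) x"
proof -
  have "form2 Q (axis l 1) x = (\<Sum>i\<in>UNIV. if i = l then (\<Sum>j\<in>UNIV. Q l j * x$j) else 0)"
    unfolding form2_def axis_def by (intro sum.cong refl) auto
  then show ?thesis by (simp add: form1_def)
qed

lemma form1_axis: "form1 L (axis l 1) = L l"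
proof -
  have "form1 L (axis l 1) = (\<Sum>i\<in>UNIV. if i = l then L l else 0)"
    unfolding form1_def axis_def by (intro sum.cong refl) auto
  then show ?thesis by simp
qed

lemma pd_eq_linear_coeff:
  assumes "\<And>s. f (x + s *s axis l 1) = A + B * s + C * s^2 + D * s^3"
  shows "pd l f x = B"
proof -
  have "(\<chi> j. if j = l then t else x$j) = x + (t - x$l) *s axis l 1" for t
    by (simp add: vec_eq_iff axis_def)
  then have "(\<lambda>t. f (\<chi> j. if j = l then t else x$j)) =
      (\<lambda>t. A + B * (t - x$l) + C * (t - x$l)^2 + D * (t - x$l)^3)"
    by (simp add: assms)
  moreover have "((\<lambda>t. A + B * (t - x$l) + C * (t - x$l)^2 + D * (t - x$l)^3) has_field_derivative B) (at (x$l))"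
    by (auto intro!: derivative_eq_intros)
  ultimately show ?thesis
    unfolding pd_def by (simp add: DERIV_imp_deriv)
qed

lemma pd_form3:
  assumes "sym3 T" "\<And>x. f x = form3 T x x x"
  shows "pd l f x = form2 (\<lambda>j k. 3 * T l j k) x x"
proof -
  have "pd l f x = 3 * form3 T (axis l 1) x x"
    by (rule pd_eq_linear_coeff) (simp add: assms form3_on_line)
  then show ?thesis
    by (simp add: form3_axis form2_def sum_distrib_left mult_ac)
qed

lemma pd_form2:
  assumes "sym2 Q" "\<And>x. f x = form2 Q x x"
  shows "pd l f x = form1 (\<lambda>k. 2 * Q l k) x"
proof -
  have "pd l f x = 2 * form2 Q (axis l 1) x"
    by (rule pd_eq_linear_coeff[where D = 0]) (simp add: assms form2_on_line)
  then show ?thesis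
    by (simp add: form2_axis form1_def sum_distrib_left mult_ac)
qed

lemma pd_form1:
  assumes "\<And>x. f x = form1 L x"
  shows "pd l f x = L l"
  by (rule pd_eq_linear_coeff[where C = 0 and D = 0]) (simp add: assms form1_linear form1_axis)

definition contract :: "(3 \<Rightarrow> 3 \<Rightarrow> 3 \<Rightarrow> complex) \<Rightarrow> complex^3 \<Rightarrow> complex mat3" where
  "contract T x = (\<lambda>i j. form1 (\<lambda>k. T i j k) x)"

lemma hess_form3:
  assumes "sym3 T" "\<And>x. f x = form3 T x x x"
  shows "hess f x = mat_scale 6 (contract T x)"
proof -
  have "sym2 (\<lambda>j k. 3 * T l j k)" for l
    using assms(1) unfolding sym3_def sym2_def by metis
  then have "pd i (pd j f) x = form1 (\<lambda>k. 2 * (3 * T j i k)) x" for i j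
    by (intro pd_form2) (simp_all add: pd_form3[OF assms])
  then show ?thesis
    using assms(1) unfolding hess_def mat_scale_def contract_def form1_def sym3_def
    by (auto simp: fun_eq_iff sum_distrib_left mult_ac)
qed

lemma hess_form2:
  assumes "sym2 Q" "\<And>x. f x = form2 Q x x"
  shows "hess f x = mat_scale 2 Q"
proof -
  have "pd i (pd j f) x = 2 * Q j i" for i j
    by (rule pd_form1) (simp add: pd_form2[OF assms])
  then show ?thesis
    using assms(1) unfolding hess_def mat_scale_def sym2_def by auto
qed

section \<open>The covariants of a cubic given by a symmetric tensor\<close>

lemma lin_square_form2: "(lin u y)^2 = form2 (outer u u) y y"
  by (simp add: lin_def form2_def outer_def power2_eq_square sum_distrib_left sum_distrib_right mult_ac)

lemma sym2_outer: "sym2 (outer u u :: 'a::comm_ring_1 mat3)"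
  by (simp add: sym2_def outer_def mult.commute)

lemma hess_lin_square: "hess (\<lambda>y. (lin u y)^2) x = mat_scale 2 (outer u u)"
  by (rule hess_form2[OF sym2_outer]) (simp add: lin_square_form2)

lemma Hessian_form3:
  assumes "sym3 T" "\<And>x. f x = form3 T x x x"
  shows "Hessian f x = 18 * mixed_det (contract T x) (contract T x) (contract T x)"
  unfolding Hessian_def J_2_eq_mixed_det hess_form3[OF assms] by (simp add: mixed_det_scale)

definition slice :: "(3 \<Rightarrow> 3 \<Rightarrow> 3 \<Rightarrow> 'a) \<Rightarrow> 3 \<Rightarrow> 'a mat3" where
  "slice T k = (\<lambda>i j. T i j k)"

lemma contract_eq_slices:
  "contract T x = mat_add (mat_scale (x$1) (slice T 1))
     (mat_add (mat_scale (x$2) (slice T 2)) (mat_scale (x$3) (slice T 3)))"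
  by (simp add: contract_def form1_def sum_3 mat_add_def mat_scale_def slice_def fun_eq_iff mult_ac)

definition theta_matrix :: "(3 \<Rightarrow> 3 \<Rightarrow> 3 \<Rightarrow> complex) \<Rightarrow> complex^3 \<Rightarrow> complex mat3" where
  "theta_matrix T u = (\<lambda>k l. mixed_det (slice T k) (slice T l) (outer u u))"

lemma theta_form2:
  assumes "sym3 T" "\<And>x. f x = form3 T x x x"
  shows "theta f u x = form2 (\<lambda>k l. 18 * theta_matrix T u k l) x x"
proof -
  have "theta f u x = 18 * mixed_det (contract T x) (contract T x) (outer u u)"
    unfolding theta_def J_2_eq_mixed_det hess_form3[OF assms] hess_lin_square
    by (simp add: mixed_det_scale)
  then show ?thesis
    by (simp add: contract_eq_slices mixed_det_add mixed_det_scale theta_matrix_def form2_def sum_3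
        algebra_simps)
qed

lemma F6u_form3:
  assumes "sym3 T" "\<And>x. f x = form3 T x x x"
  shows "F6u f u x = 27/32 * mixed_det (theta_matrix T u) (theta_matrix T u) (outer u u)"
proof -
  have "sym2 (\<lambda>k l. 18 * theta_matrix T u k l)"
    unfolding sym2_def theta_matrix_def using mixed_det_swap12 by metis
  then have "hess (theta f u) x = mat_scale 36 (theta_matrix T u)"
    by (subst hess_form2[where Q = "\<lambda>k l. 18 * theta_matrix T u k l"])
      (simp_all add: theta_form2[OF assms] mat_scale_def)
  then show ?thesis
    unfolding F6u_def J_2_eq_mixed_det hess_lin_square by (simp add: mixed_det_scale)
qed

section \<open>Binary cubics in two linear forms\<close>

definition tensor_outer :: "'a::times^3 \<Rightarrow> 'a^3 \<Rightarrow> 'a^3 \<Rightarrow> (3 \<Rightarrow> 3 \<Rightarrow> 3 \<Rightarrow> 'a)" where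
  "tensor_outer a b c = (\<lambda>i j k. a$i * b$j * c$k)"

definition tensor_add :: "(3 \<Rightarrow> 3 \<Rightarrow> 3 \<Rightarrow> 'a::plus) \<Rightarrow> (3 \<Rightarrow> 3 \<Rightarrow> 3 \<Rightarrow> 'a) \<Rightarrow> (3 \<Rightarrow> 3 \<Rightarrow> 3 \<Rightarrow> 'a)" where
  "tensor_add S T = (\<lambda>i j k. S i j k + T i j k)"

definition tensor_scale :: "'a::times \<Rightarrow> (3 \<Rightarrow> 3 \<Rightarrow> 3 \<Rightarrow> 'a) \<Rightarrow> (3 \<Rightarrow> 3 \<Rightarrow> 3 \<Rightarrow> 'a)" where
  "tensor_scale c T = (\<lambda>i j k. c * T i j k)"

definition binary_cubic_tensor ::
    "complex \<Rightarrow> complex \<Rightarrow> complex \<Rightarrow> complex \<Rightarrow> complex^3 \<Rightarrow> complex^3 \<Rightarrow> (3 \<Rightarrow> 3 \<Rightarrow> 3 \<Rightarrow> complex)" where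
  "binary_cubic_tensor g0 g1 g2 g3 a b =
     tensor_add (tensor_scale g0 (tensor_outer a a a))
    (tensor_add (tensor_scale (g1/3)
       (tensor_add (tensor_outer a a b) (tensor_add (tensor_outer a b a) (tensor_outer b a a))))
    (tensor_add (tensor_scale (g2/3)
       (tensor_add (tensor_outer a b b) (tensor_add (tensor_outer b a b) (tensor_outer b b a))))
     (tensor_scale g3 (tensor_outer b b b))))"

lemma sym3_binary_cubic_tensor: "sym3 (binary_cubic_tensor g0 g1 g2 g3 a b)"
  unfolding sym3_def binary_cubic_tensor_def tensor_add_def tensor_scale_def tensor_outer_def
  by (simp add: algebra_simps)

lemma form3_tensor_ops:
  "form3 (tensor_add S T) x y z = form3 S x y z + form3 T x y z"
  "form3 (tensor_scale s T) x y z = s * form3 T x y z"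
  "form3 (tensor_outer a b c) x y z = lin a x * lin b y * lin c z"
  by (simp_all add: form3_def tensor_add_def tensor_scale_def tensor_outer_def lin_def sum_3
      algebra_simps)

lemma form3_binary_cubic_tensor:
  "form3 (binary_cubic_tensor g0 g1 g2 g3 a b) x x x =
     g0 * (lin a x)^3 + g1 * (lin a x)^2 * lin b x + g2 * lin a x * (lin b x)^2 + g3 * (lin b x)^3"
  by (simp add: binary_cubic_tensor_def form3_tensor_ops power2_eq_square power3_eq_cube algebra_simps)

definition binary_sym_matrix :: "'a::comm_ring_1^3 \<Rightarrow> 'a^3 \<Rightarrow> 'a \<Rightarrow> 'a \<Rightarrow> 'a \<Rightarrow> 'a mat3" where
  "binary_sym_matrix a b p q r =
     mat_add (mat_scale p (outer a a))
    (mat_add (mat_scale q (outer a b)) (mat_add (mat_scale q (outer b a)) (mat_scale r (outer b b))))"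

lemma binary_sym_matrix_eq:
  "binary_sym_matrix a b p q r = (\<lambda>i j. p * (a$i * a$j) + q * (a$i * b$j + b$i * a$j) + r * (b$i * b$j))"
  by (simp add: binary_sym_matrix_def mat_add_def mat_scale_def outer_def fun_eq_iff algebra_simps)

lemma contract_binary_cubic_tensor:
  "contract (binary_cubic_tensor g0 g1 g2 g3 a b) x =
     binary_sym_matrix a b (g0 * lin a x + g1/3 * lin b x) (g1/3 * lin a x + g2/3 * lin b x)
       (g2/3 * lin a x + g3 * lin b x)"
  by (simp add: binary_sym_matrix_eq contract_def form1_def lin_def binary_cubic_tensor_def
      tensor_add_def tensor_scale_def tensor_outer_def sum_3 fun_eq_iff field_simps)

lemma slice_binary_cubic_tensor:
  "slice (binary_cubic_tensor g0 g1 g2 g3 a b) k =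
     binary_sym_matrix a b (g0 * a$k + g1/3 * b$k) (g1/3 * a$k + g2/3 * b$k) (g2/3 * a$k + g3 * b$k)"
  by (simp add: binary_sym_matrix_eq slice_def binary_cubic_tensor_def
      tensor_add_def tensor_scale_def tensor_outer_def fun_eq_iff algebra_simps)

text \<open>Expanding by multilinearity, every term contains det3 of three vectors from {a, b}, which has a
  repeated column.\<close>

lemma mixed_det_binary_sym_matrix:
  "mixed_det (binary_sym_matrix a b p1 q1 r1) (binary_sym_matrix a b p2 q2 r2) (binary_sym_matrix a b p3 q3 r3)
     = 0"
  unfolding binary_sym_matrix_def
  by (simp add: mixed_det_add mixed_det_scale mixed_det_outer det3_repeated)

lemma mixed_det_binary_sym_matrix_outer:
  "mixed_det (binary_sym_matrix a b p1 q1 r1) (binary_sym_matrix a b p2 q2 r2) (outer u u) =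
     (det3 a b u)^2 * (p1 * r2 + r1 * p2 - 2 * q1 * q2)"
  using det3_swap12[of b a u] unfolding binary_sym_matrix_def
  by (simp add: mixed_det_add mixed_det_scale mixed_det_outer det3_repeated power2_eq_square
      algebra_simps)

definition cubic_disc :: "'a::comm_ring_1 \<Rightarrow> 'a \<Rightarrow> 'a \<Rightarrow> 'a \<Rightarrow> 'a" where
  "cubic_disc g0 g1 g2 g3 =
     g1^2 * g2^2 - 4 * g0 * g2^3 - 4 * g1^3 * g3 - 27 * g0^2 * g3^2 + 18 * g0 * g1 * g2 * g3"

lemma Hessian_binary_cubic:
  assumes "\<And>x. f x = form3 (binary_cubic_tensor g0 g1 g2 g3 a b) x x x"
  shows "Hessian f x = 0"
  unfolding Hessian_form3[OF sym3_binary_cubic_tensor assms] contract_binary_cubic_tensor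
    mixed_det_binary_sym_matrix by simp

lemma F6u_binary_cubic:
  assumes "\<And>x. f x = form3 (binary_cubic_tensor g0 g1 g2 g3 a b) x x x"
  shows "F6u f u x = (det3 a b u)^6 * cubic_disc g0 g1 g2 g3 / 16"
proof -
  let ?d = "(det3 a b u)^2"
  have theta: "theta_matrix (binary_cubic_tensor g0 g1 g2 g3 a b) u =
      binary_sym_matrix a b (?d * (2 * g0 * (g2/3) - 2 * (g1/3)^2)) (?d * (g0 * g3 - (g1/3) * (g2/3)))
        (?d * (2 * (g1/3) * g3 - 2 * (g2/3)^2))"
    unfolding theta_matrix_def slice_binary_cubic_tensor mixed_det_binary_sym_matrix_outer
    by (simp add: binary_sym_matrix_eq fun_eq_iff power2_eq_square algebra_simps)
  show ?thesis
    unfolding F6u_form3[OF sym3_binary_cubic_tensor assms] theta mixed_det_binary_sym_matrix_outer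
      cubic_disc_def
    by (simp add: eval_nat_numeral power_Suc algebra_simps)
qed

lemma lin_add: "lin (a + b) x = lin a x + lin b x"
  by (simp add: lin_def algebra_simps sum.distrib)

lemma lin_scale: "lin (c *s a) x = c * lin a x"
  by (simp add: lin_def sum_distrib_left mult_ac)

lemma lin_axis: "lin a (axis i 1) = a$i"
proof -
  have "lin a (axis i 1) = (\<Sum>j\<in>UNIV. if j = i then a$i else 0)"
    unfolding lin_def axis_def by (intro sum.cong refl) auto
  then show ?thesis by simp
qed

lemma lin_eq_0_iff: "(\<forall>x. lin v x = 0) \<longleftrightarrow> v = 0"
proof
  assume "\<forall>x. lin v x = 0"
  then show "v = 0" by (metis lin_axis vec_eq_iff zero_index)
qed (simp add: lin_def)

lemma lin_indep2_iff: "lin_indep2 a b \<longleftrightarrow> (\<forall>\<mu> \<nu>. \<mu> *s a + \<nu> *s b = 0 \<longrightarrow> \<mu> = 0 \<and> \<nu> = 0)"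
proof -
  have comb: "\<mu> * lin a x + \<nu> * lin b x = lin (\<mu> *s a + \<nu> *s b) x" for \<mu> \<nu> x
    by (simp add: lin_add lin_scale)
  show ?thesis
    unfolding lin_indep2_def comb lin_eq_0_iff ..
qed

lemma lin_indep2_comb:
  assumes "lin_indep2 a b" "p1 * q2 - p2 * q1 \<noteq> 0"
  shows "lin_indep2 (p1 *s a + q1 *s b) (p2 *s a + q2 *s b)"
  unfolding lin_indep2_iff
proof (intro allI impI)
  fix \<mu> \<nu> assume "\<mu> *s (p1 *s a + q1 *s b) + \<nu> *s (p2 *s a + q2 *s b) = 0"
  then have "(\<mu> * p1 + \<nu> * p2) *s a + (\<mu> * q1 + \<nu> * q2) *s b = 0"
    by (simp add: vec_eq_iff algebra_simps)
  with assms(1) have e: "\<mu> * p1 + \<nu> * p2 = 0" "\<mu> * q1 + \<nu> * q2 = 0"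
    unfolding lin_indep2_iff by blast+
  have "\<mu> * (p1 * q2 - p2 * q1) = q2 * (\<mu> * p1 + \<nu> * p2) - p2 * (\<mu> * q1 + \<nu> * q2)"
    "\<nu> * (p1 * q2 - p2 * q1) = p1 * (\<mu> * q1 + \<nu> * q2) - q1 * (\<mu> * p1 + \<nu> * p2)"
    by (simp_all add: algebra_simps)
  then show "\<mu> = 0 \<and> \<nu> = 0" using e assms(2) by simp
qed

lemma det3_nonzero_imp_lin_indep2:
  assumes "det3 a b u \<noteq> 0"
  shows "lin_indep2 a b"
  unfolding lin_indep2_iff
proof (intro allI impI)
  fix \<mu> \<nu> assume h: "\<mu> *s a + \<nu> *s b = 0"
  have "\<mu> * det3 a b u = det3 (\<mu> *s a + \<nu> *s b) b u" "\<nu> * det3 a b u = det3 a (\<mu> *s a + \<nu> *s b) u"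
    by (simp_all add: det3_def alt3_def algebra_simps)
  then show "\<mu> = 0 \<and> \<nu> = 0"
    using h assms by (simp add: det3_def alt3_def)
qed

lemma lin_indep2_imp_det3_nonzero:
  assumes "lin_indep2 a b"
  obtains u where "det3 a b u \<noteq> 0"
proof (rule ccontr)
  assume "\<not> thesis"
  with that have "det3 a b (axis 1 1) = 0" "det3 a b (axis 2 1) = 0" "det3 a b (axis 3 1) = 0"
    by blast+
  then have c: "a$2 * b$3 = a$3 * b$2" "a$3 * b$1 = a$1 * b$3" "a$1 * b$2 = a$2 * b$1"
    by (simp_all add: det3_def alt3_def axis_def algebra_simps)
  have ind: "\<And>\<mu> \<nu>. \<mu> *s a + \<nu> *s b = 0 \<Longrightarrow> \<mu> = 0 \<and> \<nu> = 0"
    using assms unfolding lin_indep2_iff by blast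
  show False
  proof (cases "a = 0")
    case True
    then show False using ind[of 1 0] by simp
  next
    case False
    then obtain i where "a$i \<noteq> 0" by (auto simp: vec_eq_iff)
    moreover have "(b$i) *s a + (- a$i) *s b = 0"
      using exhaust_3[of i] c by (auto simp: vec_eq_iff forall_3 algebra_simps)
    ultimately show False using ind by fastforce
  qed
qed

definition concurrent :: "complex^3 \<Rightarrow> complex^3 \<Rightarrow> complex^3 \<Rightarrow> bool" where
  "concurrent a b c \<longleftrightarrow> lin_dep3 a b c \<and> lin_indep2 a b \<and> lin_indep2 a c \<and> lin_indep2 b c"

lemma concurrent_in_span2:
  assumes "lin_indep2 a b"
    and "p1 * q2 - p2 * q1 \<noteq> 0" "p1 * q3 - p3 * q1 \<noteq> 0" "p2 * q3 - p3 * q2 \<noteq> 0"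
  shows "concurrent (p1 *s a + q1 *s b) (p2 *s a + q2 *s b) (p3 *s a + q3 *s b)"
proof -
  have "lin_dep3 (p1 *s a + q1 *s b) (p2 *s a + q2 *s b) (p3 *s a + q3 *s b)"
    unfolding lin_dep3_def
  proof (intro exI conjI allI)
    show "(p2 * q3 - p3 * q2, p3 * q1 - p1 * q3, p1 * q2 - p2 * q1) \<noteq> (0, 0, 0)"
      using assms(2) by simp
    show "(p2 * q3 - p3 * q2) * lin (p1 *s a + q1 *s b) x + (p3 * q1 - p1 * q3) * lin (p2 *s a + q2 *s b) x
        + (p1 * q2 - p2 * q1) * lin (p3 *s a + q3 *s b) x = 0" for x
      by (simp add: lin_add lin_scale algebra_simps)
  qed
  then show ?thesis
    unfolding concurrent_def using assms by (simp add: lin_indep2_comb)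
qed

lemma concurrent_third_in_span:
  assumes "concurrent a b c"
  obtains p q where "p \<noteq> 0" "q \<noteq> 0" "\<And>x. lin c x = p * lin a x + q * lin b x"
proof -
  obtain \<alpha> \<beta> \<gamma> where ne: "(\<alpha>, \<beta>, \<gamma>) \<noteq> (0, 0, 0)"
    and dep: "\<And>x. \<alpha> * lin a x + \<beta> * lin b x + \<gamma> * lin c x = 0"
    using assms unfolding concurrent_def lin_dep3_def by blast
  have ind: "lin_indep2 a b" "lin_indep2 a c" "lin_indep2 b c"
    using assms unfolding concurrent_def by auto
  have "\<gamma> \<noteq> 0"
  proof
    assume "\<gamma> = 0"
    then have "\<forall>x. \<alpha> * lin a x + \<beta> * lin b x = 0" using dep by simp
    then have "\<alpha> = 0 \<and> \<beta> = 0" using ind(1) unfolding lin_indep2_def by blast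
    with \<open>\<gamma> = 0\<close> ne show False by simp
  qed
  define p where "p = - \<alpha> / \<gamma>"
  define q where "q = - \<beta> / \<gamma>"
  have c: "lin c x = p * lin a x + q * lin b x" for x
  proof -
    have "\<gamma> * lin c x = - \<alpha> * lin a x - \<beta> * lin b x"
      using dep[of x] by (simp add: algebra_simps eq_neg_iff_add_eq_0)
    then show ?thesis using \<open>\<gamma> \<noteq> 0\<close> unfolding p_def q_def by (simp add: field_simps)
  qed
  have "p \<noteq> 0"
  proof
    assume "p = 0"
    then have "\<forall>x. q * lin b x + (-1) * lin c x = 0" using c by simp
    then have "q = 0 \<and> (-1::complex) = 0" using ind(3) unfolding lin_indep2_def by blast
    then show False by simp
  qed
  moreover have "q \<noteq> 0"
  proof
    assume "q = 0"
    then have "\<forall>x. p * lin a x + (-1) * lin c x = 0" using c by simp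
    then have "p = 0 \<and> (-1::complex) = 0" using ind(2) unfolding lin_indep2_def by blast
    then show False by simp
  qed
  ultimately show ?thesis using that c by blast
qed

section \<open>Sums of two cubes and products of concurrent lines\<close>

lemma cube_root_of_unity_exists: "\<exists>w::complex. w^2 + w + 1 = 0"
proof -
  have "\<exists>w. poly [:1, 1, 1:] w = (0::complex)"
    by (rule alg_closed_imp_poly_has_root) simp
  then show ?thesis by (simp add: power2_eq_square algebra_simps)
qed

lemma cube_root_of_unity:
  fixes w :: complex
  assumes "w^2 + w + 1 = 0"
  shows "w^3 = 1" and "w \<noteq> 1" and "w^2 \<noteq> w" and "w^2 \<noteq> 1"
proof -
  have "w^3 - 1 = (w - 1) * (w^2 + w + 1)"
    by (simp add: algebra_simps power2_eq_square power3_eq_cube)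
  then show w3: "w^3 = 1" using assms by simp
  show w1: "w \<noteq> 1" using assms by auto
  then show "w^2 \<noteq> w" using assms by (auto simp: power2_eq_square)
  show "w^2 \<noteq> 1"
  proof
    assume "w^2 = 1"
    then have "w^3 = w" by (simp add: power3_eq_cube power2_eq_square)
    then show False using w1 w3 by simp
  qed
qed

lemma sum_of_cubes_factor:
  fixes w :: complex
  assumes "w^2 + w + 1 = 0"
  shows "(X + Y) * (X + w * Y) * (X + w^2 * Y) = X^3 + Y^3"
proof -
  have "(X + Y) * (X + w * Y) * (X + w^2 * Y) =
      X^3 + (w^2 + w + 1) * X^2 * Y + w * (w^2 + w + 1) * X * Y^2 + w^3 * Y^3"
    by (simp add: algebra_simps power2_eq_square power3_eq_cube)
  then show ?thesis using assms cube_root_of_unity(1)[OF assms] by simp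
qed

lemma difference_of_cubes_factor:
  fixes w :: complex
  assumes "w^2 + w + 1 = 0"
  shows "(X - w * Y)^3 - (X - w^2 * Y)^3 = 3 * (w^2 - w) * X * Y * (X + Y)"
proof -
  have w3: "w^3 = 1" by (rule cube_root_of_unity(1)[OF assms])
  have "(X - w * Y)^3 - (X - w^2 * Y)^3 =
      3 * (w^2 - w) * X^2 * Y + 3 * (w^2 - w^3 * w) * X * Y^2 + (w^3 * w^3 - w^3) * Y^3"
    by (simp add: algebra_simps power2_eq_square power3_eq_cube)
  then show ?thesis using w3 by (simp add: algebra_simps power2_eq_square)
qed

definition sum_of_two_cubes :: "form \<Rightarrow> bool" where
  "sum_of_two_cubes f \<longleftrightarrow> (\<exists>a0 b0 a b. a0 \<noteq> 0 \<and> b0 \<noteq> 0 \<and> lin_indep2 a b \<and>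
     f = (\<lambda>x. a0 * (lin a x)^3 + b0 * (lin b x)^3))"

definition product_of_concurrent_lines :: "form \<Rightarrow> bool" where
  "product_of_concurrent_lines f \<longleftrightarrow> (\<exists>a b c. concurrent a b c \<and> f = (\<lambda>x. lin a x * lin b x * lin c x))"

lemma sum_of_two_cubes_imp_product_of_concurrent_lines:
  assumes "sum_of_two_cubes f"
  shows "product_of_concurrent_lines f"
proof -
  obtain a0 b0 a b where a0: "a0 \<noteq> 0" and b0: "b0 \<noteq> 0" and ind: "lin_indep2 a b"
    and f: "f = (\<lambda>x. a0 * (lin a x)^3 + b0 * (lin b x)^3)"
    using assms unfolding sum_of_two_cubes_def by blast
  obtain \<alpha> \<beta> :: complex where \<alpha>: "\<alpha>^3 = a0" and \<beta>: "\<beta>^3 = b0"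
    using nth_root_exists[of 3] by (metis zero_less_numeral)
  obtain w :: complex where w: "w^2 + w + 1 = 0"
    using cube_root_of_unity_exists by blast
  have "\<alpha> * \<beta> \<noteq> 0" using \<alpha> \<beta> a0 b0 by auto
  moreover have "\<alpha> * (w * \<beta>) - \<alpha> * \<beta> = \<alpha> * \<beta> * (w - 1)"
    "\<alpha> * (w^2 * \<beta>) - \<alpha> * \<beta> = \<alpha> * \<beta> * (w^2 - 1)"
    "\<alpha> * (w^2 * \<beta>) - \<alpha> * (w * \<beta>) = \<alpha> * \<beta> * (w^2 - w)"
    by (simp_all add: algebra_simps)
  ultimately have
    "\<alpha> * (w * \<beta>) - \<alpha> * \<beta> \<noteq> 0" "\<alpha> * (w^2 * \<beta>) - \<alpha> * \<beta> \<noteq> 0" "\<alpha> * (w^2 * \<beta>) - \<alpha> * (w * \<beta>) \<noteq> 0"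
    using cube_root_of_unity[OF w] by simp_all
  then have "concurrent (\<alpha> *s a + \<beta> *s b) (\<alpha> *s a + (w * \<beta>) *s b) (\<alpha> *s a + (w^2 * \<beta>) *s b)"
    by (intro concurrent_in_span2[OF ind])
  moreover have "f = (\<lambda>x. lin (\<alpha> *s a + \<beta> *s b) x * lin (\<alpha> *s a + (w * \<beta>) *s b) x
      * lin (\<alpha> *s a + (w^2 * \<beta>) *s b) x)"
  proof
    fix x
    have "f x = (\<alpha> * lin a x)^3 + (\<beta> * lin b x)^3"
      by (simp add: f power_mult_distrib \<alpha> \<beta>)
    also have "\<dots> = (\<alpha> * lin a x + \<beta> * lin b x) * (\<alpha> * lin a x + w * (\<beta> * lin b x))
        * (\<alpha> * lin a x + w^2 * (\<beta> * lin b x))"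
      by (rule sum_of_cubes_factor[OF w, symmetric])
    finally show "f x = lin (\<alpha> *s a + \<beta> *s b) x * lin (\<alpha> *s a + (w * \<beta>) *s b) x
        * lin (\<alpha> *s a + (w^2 * \<beta>) *s b) x"
      by (simp add: lin_add lin_scale mult.assoc)
  qed
  ultimately show ?thesis
    unfolding product_of_concurrent_lines_def by blast
qed

lemma product_of_concurrent_lines_imp_sum_of_two_cubes:
  assumes "product_of_concurrent_lines f"
  shows "sum_of_two_cubes f"
proof -
  obtain a b c where abc: "concurrent a b c" and f: "f = (\<lambda>x. lin a x * lin b x * lin c x)"
    using assms unfolding product_of_concurrent_lines_def by blast
  obtain p q where p: "p \<noteq> 0" and q: "q \<noteq> 0" and c: "\<And>x. lin c x = p * lin a x + q * lin b x"
    using concurrent_third_in_span[OF abc] by blast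
  obtain w :: complex where w: "w^2 + w + 1 = 0"
    using cube_root_of_unity_exists by blast
  have d: "w^2 - w \<noteq> 0" using cube_root_of_unity(3)[OF w] by simp
  define a0 where "a0 = 1 / (3 * (w^2 - w) * p * q)"
  define a' where "a' = p *s a + (- (w * q)) *s b"
  define b' where "b' = p *s a + (- (w^2 * q)) *s b"
  have "p * (- (w^2 * q)) - p * (- (w * q)) = p * q * (w - w^2)"
    by (simp add: algebra_simps)
  then have "p * (- (w^2 * q)) - p * (- (w * q)) \<noteq> 0"
    using p q d by simp
  then have "lin_indep2 a' b'"
    using abc unfolding a'_def b'_def concurrent_def by (blast intro: lin_indep2_comb)
  moreover have "f = (\<lambda>x. a0 * (lin a' x)^3 + (- a0) * (lin b' x)^3)"
  proof
    fix x
    have "a0 * (lin a' x)^3 + (- a0) * (lin b' x)^3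
        = a0 * ((p * lin a x - w * (q * lin b x))^3 - (p * lin a x - w^2 * (q * lin b x))^3)"
      unfolding a'_def b'_def lin_add lin_scale by (simp add: algebra_simps)
    also have "\<dots> = lin a x * lin b x * (p * lin a x + q * lin b x)"
      unfolding difference_of_cubes_factor[OF w] a0_def using d p q by (simp add: field_simps)
    finally show "f x = a0 * (lin a' x)^3 + (- a0) * (lin b' x)^3" by (simp add: f c)
  qed
  moreover have "a0 \<noteq> 0" "- a0 \<noteq> 0" using d p q by (simp_all add: a0_def)
  ultimately show ?thesis
    unfolding sum_of_two_cubes_def by blast
qed

section \<open>Cubics with vanishing Hessian\<close>

definition degree_in :: "3 \<Rightarrow> 3 \<Rightarrow> 3 \<Rightarrow> 3 \<Rightarrow> nat" where
  "degree_in v i j k = (if i = v then 1 else 0) + (if j = v then 1 else 0) + (if k = v then 1 else 0)"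

text \<open>The coefficient c i j of x1^i x2^j x3^k is spread evenly over the 3!/(i! j! k!) index triples
  with that degree pattern.\<close>

definition coeff_tensor :: "(nat \<Rightarrow> nat \<Rightarrow> complex) \<Rightarrow> (3 \<Rightarrow> 3 \<Rightarrow> 3 \<Rightarrow> complex)" where
  "coeff_tensor c i j k = c (degree_in 1 i j k) (degree_in 2 i j k) *
     of_nat (fact (degree_in 1 i j k) * fact (degree_in 2 i j k) * fact (degree_in 3 i j k)) / 6"

lemma form3_coeff_tensor:
  "form3 (coeff_tensor c) x x x = (\<Sum>i\<le>3. \<Sum>j\<le>3 - i. c i j * (x$1)^i * (x$2)^j * (x$3)^(3 - i - j))"
proof -
  have "form3 (coeff_tensor c) x x x =
      c 0 0 * (x$3)^3 + c 0 1 * x$2 * (x$3)^2 + c 0 2 * (x$2)^2 * x$3 + c 0 3 * (x$2)^3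
      + c 1 0 * x$1 * (x$3)^2 + c 1 1 * x$1 * x$2 * x$3 + c 1 2 * x$1 * (x$2)^2
      + c 2 0 * (x$1)^2 * x$3 + c 2 1 * (x$1)^2 * x$2 + c 3 0 * (x$1)^3"
    by (simp add: form3_def sum_3 coeff_tensor_def degree_in_def numeral_3_eq_3 numeral_2_eq_2
        algebra_simps power2_eq_square power3_eq_cube)
  also have "\<dots> = (\<Sum>i\<le>3. \<Sum>j\<le>3 - i. c i j * (x$1)^i * (x$2)^j * (x$3)^(3 - i - j))"
    by (simp add: numeral_3_eq_3 numeral_2_eq_2 atMost_Suc mult_ac)
  finally show ?thesis .
qed

lemma ternary_cubic_imp_sym_tensor:
  assumes "ternary_cubic f"
  obtains T where "sym3 T" "\<And>x. f x = form3 T x x x"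
proof -
  obtain c where "\<And>x. f x = (\<Sum>i\<le>3. \<Sum>j\<le>3 - i. c i j * (x$1)^i * (x$2)^j * (x$3)^(3 - i - j))"
    using assms unfolding ternary_cubic_def by blast
  moreover have "sym3 (coeff_tensor c)"
    unfolding sym3_def coeff_tensor_def degree_in_def by (simp add: add_ac)
  ultimately show ?thesis
    using that form3_coeff_tensor by metis
qed

lemma cubic_poly_eq_0_coeffs:
  fixes A B C D :: complex
  assumes "\<And>z. A + B * z + C * z^2 + D * z^3 = 0"
  shows "A = 0" "B = 0" "C = 0" "D = 0"
proof -
  show A: "A = 0" using assms[of 0] by simp
  have e: "B + C + D = 0" "- B + C - D = 0" "B * 2 + C * 4 + D * 8 = 0"
    using assms[of 1] assms[of "-1"] assms[of 2] A by (simp_all add: power3_eq_cube power2_eq_square)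
  have "2 * C = (B + C + D) + (- B + C - D)" by simp
  also have "\<dots> = 0" by (simp only: e add_0)
  finally show C: "C = 0" by simp
  have "6 * D = (B * 2 + C * 4 + D * 8) - 2 * (B + C + D) - 2 * C" by (simp add: algebra_simps)
  also have "\<dots> = 0" by (simp only: e(1,3)) (simp add: C)
  finally show D: "D = 0" by simp
  show "B = 0" using e(1) C D by simp
qed

lemma form3_nonzero_off_plane:
  assumes sym: "sym3 T" and nz: "form3 T p0 p0 p0 \<noteq> 0"
  obtains p where "p$3 \<noteq> 0" "form3 T p p p \<noteq> 0"
proof -
  have "\<exists>p. p$3 \<noteq> 0 \<and> form3 T p p p \<noteq> 0"
  proof (cases "p0$3 = 0")
    case True
    define A where "A = form3 T p0 p0 p0"
    define B where "B = 3 * form3 T (axis 3 1) p0 p0"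
    define C where "C = 3 * form3 T (axis 3 1) (axis 3 1) p0"
    define D where "D = form3 T (axis 3 1) (axis 3 1) (axis 3 1)"
    have line: "form3 T (p0 + s *s axis 3 1) (p0 + s *s axis 3 1) (p0 + s *s axis 3 1)
        = A + B * s + C * s^2 + D * s^3" for s
      unfolding form3_on_line[OF sym] A_def B_def C_def D_def by (simp add: mult_ac)
    show ?thesis
    proof (rule ccontr)
      assume none: "\<nexists>p. p$3 \<noteq> 0 \<and> form3 T p p p \<noteq> 0"
      have "A + B * s + C * s^2 + D * s^3 = 0" if "s \<noteq> 0" for s
      proof -
        have "(p0 + s *s axis 3 1)$3 \<noteq> 0" using True that by simp
        then show ?thesis using none line[of s] by metis
      qed
      from this[of 1] this[of 2] this[of 3] this[of 4]
      have "A + B + C + D = 0" "A + B * 2 + C * 4 + D * 8 = 0"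
        "A + B * 3 + C * 9 + D * 27 = 0" "A + B * 4 + C * 16 + D * 64 = 0"
        by (simp_all add: power2_eq_square power3_eq_cube)
      moreover have "A = 4 * (A + B + C + D) - 6 * (A + B * 2 + C * 4 + D * 8)
          + 4 * (A + B * 3 + C * 9 + D * 27) - (A + B * 4 + C * 16 + D * 64)"
        by (simp add: algebra_simps)
      ultimately show False using nz A_def by simp
    qed
  qed (use nz in blast)
  then show ?thesis using that by blast
qed

lemma det_form3_change_basis:
  fixes bb :: "3 \<Rightarrow> complex^3"
  shows "det (\<chi> i j. form3 T (bb i) (bb j) w) = det (\<chi> i j. bb j $ i) ^ 2 * det (\<chi> i j. contract T w i j)"
proof -
  have "(\<chi> i j. form3 T (bb i) (bb j) w) = transpose (\<chi> i j. bb j $ i) ** (\<chi> i j. contract T w i j) ** (\<chi> i j. bb j $ i)"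
    by (simp add: vec_eq_iff matrix_matrix_mult_def transpose_def form3_def contract_def form1_def
        sum_distrib_left sum_3 algebra_simps)
  then show ?thesis by (simp add: det_mul det_transpose power2_eq_square)
qed

text \<open>The determinant of the matrix of T(w,-,-) in a basis b1, b2, p with T(b1,p,p) = T(b2,p,p) = 0,
  where w = y1 b1 + y2 b2 + z p, c = T(p,p,p), q_ij = T(b_i,b_j,p) and c1, ..., c4 are the
  coefficients of T on span{b1, b2}.\<close>

definition adapted_hess_det ::
    "complex \<Rightarrow> complex \<Rightarrow> complex \<Rightarrow> complex \<Rightarrow> complex \<Rightarrow> complex \<Rightarrow> complex \<Rightarrow> complex
      \<Rightarrow> complex \<Rightarrow> complex \<Rightarrow> complex \<Rightarrow> complex" where
  "adapted_hess_det c q11 q12 q22 c1 c2 c3 c4 y1 y2 z =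
    (let m11 = c1 * y1 + c2 * y2 + q11 * z; m12 = c2 * y1 + c3 * y2 + q12 * z; m13 = q11 * y1 + q12 * y2;
         m22 = c3 * y1 + c4 * y2 + q22 * z; m23 = q12 * y1 + q22 * y2; m33 = c * z in
     m11 * m22 * m33 + m12 * m23 * m13 + m13 * m12 * m23 - m11 * m23 * m23 - m12 * m12 * m33 - m13 * m22 * m13)"

context
  fixes T :: "3 \<Rightarrow> 3 \<Rightarrow> 3 \<Rightarrow> complex" and b1 b2 p :: "complex^3"
  assumes sym: "sym3 T" and apolar: "form3 T b1 p p = 0" "form3 T b2 p p = 0"
begin

lemma form3_adapted_sym:
  "form3 T b1 b2 b1 = form3 T b1 b1 b2" "form3 T b2 b1 b1 = form3 T b1 b1 b2"
  "form3 T b2 b1 b2 = form3 T b1 b2 b2" "form3 T b2 b2 b1 = form3 T b1 b2 b2"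
  "form3 T b1 p b1 = form3 T b1 b1 p" "form3 T p b1 b1 = form3 T b1 b1 p"
  "form3 T b2 p b2 = form3 T b2 b2 p" "form3 T p b2 b2 = form3 T b2 b2 p"
  "form3 T b1 p b2 = form3 T b1 b2 p" "form3 T b2 b1 p = form3 T b1 b2 p"
  "form3 T b2 p b1 = form3 T b1 b2 p" "form3 T p b1 b2 = form3 T b1 b2 p"
  "form3 T p b2 b1 = form3 T b1 b2 p"
  "form3 T p b1 p = 0" "form3 T p p b1 = 0" "form3 T p b2 p = 0" "form3 T p p b2 = 0"
  using form3_swap12[OF sym] form3_swap23[OF sym] apolar by metis+

lemma form3_adapted:
  "form3 T (y1 *s b1 + y2 *s b2 + z *s p) (y1 *s b1 + y2 *s b2 + z *s p) (y1 *s b1 + y2 *s b2 + z *s p) =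
    form3 T p p p * z^3
    + 3 * z * (form3 T b1 b1 p * y1^2 + 2 * form3 T b1 b2 p * y1 * y2 + form3 T b2 b2 p * y2^2)
    + form3 T b1 b1 b1 * y1^3 + 3 * form3 T b1 b1 b2 * y1^2 * y2 + 3 * form3 T b1 b2 b2 * y1 * y2^2
    + form3 T b2 b2 b2 * y2^3"
  by (simp only: form3_linear form3_adapted_sym apolar)
    (simp add: algebra_simps power2_eq_square power3_eq_cube)

lemma det_adapted_hess:
  fixes bb :: "3 \<Rightarrow> complex^3"
  assumes "bb = (\<lambda>i. if i = 1 then b1 else if i = 2 then b2 else p)"
  shows "det (\<chi> i j. form3 T (bb i) (bb j) (y1 *s b1 + y2 *s b2 + z *s p)) =
    adapted_hess_det (form3 T p p p) (form3 T b1 b1 p) (form3 T b1 b2 p) (form3 T b2 b2 p)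
      (form3 T b1 b1 b1) (form3 T b1 b1 b2) (form3 T b1 b2 b2) (form3 T b2 b2 b2) y1 y2 z"
  unfolding det_3 adapted_hess_det_def Let_def
  by (simp add: assms form3_linear form3_adapted_sym apolar algebra_simps)

end

lemma adapted_hess_det_expand:
  "adapted_hess_det c q11 q12 q22 c1 c2 c3 c4 y1 y2 z =
   ((-c1*q12^2 + 2*c2*q11*q12 - c3*q11^2)*y1^3 + (-2*c1*q12*q22 + 2*c2*q11*q22 + c2*q12^2 - c4*q11^2)*y1^2*y2
     + (-c1*q22^2 + 2*c3*q11*q22 + c3*q12^2 - 2*c4*q11*q12)*y1*y2^2 + (-c2*q22^2 + 2*c3*q12*q22 - c4*q12^2)*y2^3)
   + ((c*(c1*c3 - c2^2) + q11*q12^2 - q11^2*q22)*y1^2 + (c*(c1*c4 - c2*c3) - 2*q11*q12*q22 + 2*q12^3)*y1*y2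
      + (c*(c2*c4 - c3^2) - q11*q22^2 + q12^2*q22)*y2^2) * z
   + (c*((c1*q22 - 2*c2*q12 + c3*q11)*y1 + (c2*q22 - 2*c3*q12 + c4*q11)*y2)) * z^2
   + (c*(q11*q22 - q12^2)) * z^3"
  unfolding adapted_hess_det_def Let_def by (simp add: algebra_simps power2_eq_square power3_eq_cube)

text \<open>The coefficients of z^3 and z^2, and then of z, give the rank-one conditions on the quadric q,
  the apolarity of q and the binary cubic c1..c4, and the rank-one conditions on that cubic.\<close>

lemma adapted_hess_det_eq_0_imp:
  assumes c: "c \<noteq> 0" and h: "\<And>y1 y2 z. adapted_hess_det c q11 q12 q22 c1 c2 c3 c4 y1 y2 z = 0"
  shows "q11 * q22 = q12^2"
    and "c1 * q22 - 2 * c2 * q12 + c3 * q11 = 0" "c2 * q22 - 2 * c3 * q12 + c4 * q11 = 0"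
    and "c1 * c3 = c2^2" "c1 * c4 = c2 * c3" "c2 * c4 = c3^2"
proof -
  note K = cubic_poly_eq_0_coeffs(2-4)[OF h[unfolded adapted_hess_det_expand]]
  show q: "q11 * q22 = q12^2" using K(3) c by simp
  show "c1 * q22 - 2 * c2 * q12 + c3 * q11 = 0" using K(2)[of 1 0] c by simp
  show "c2 * q22 - 2 * c3 * q12 + c4 * q11 = 0" using K(2)[of 0 1] c by simp
  have "q11 * q12^2 - q11^2 * q22 = 0" "- q11 * q22^2 + q12^2 * q22 = 0"
    "- 2 * q11 * q12 * q22 + 2 * q12^3 = 0"
    using q by (simp_all add: power2_eq_square power3_eq_cube algebra_simps)
  moreover have "c * (c1 * c3 - c2^2) + q11 * q12^2 - q11^2 * q22 = 0"
    "c * (c2 * c4 - c3^2) - q11 * q22^2 + q12^2 * q22 = 0"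
    "c * (c1 * c4 - c2 * c3) - 2 * q11 * q12 * q22 + 2 * q12^3 = 0"
    using K(1)[of 1 0] K(1)[of 0 1] K(1)[of 1 1] by simp_all
  ultimately show "c1 * c3 = c2^2" "c2 * c4 = c3^2" "c1 * c4 = c2 * c3"
    using c by (simp_all add: algebra_simps)
qed

lemma binary_quadric_rank_one:
  fixes q11 q12 q22 :: "'a::field"
  assumes "q11 * q22 = q12^2"
  obtains m1 m2 l where "q11 = l * m1^2" "q12 = l * m1 * m2" "q22 = l * m2^2"
proof (cases "q11 = 0")
  case True
  then show ?thesis using assms that[of q22 0 1] by simp
next
  case False
  have "q22 = q11 * (q12 / q11)^2" using assms False by (simp add: field_simps power2_eq_square)
  then show ?thesis using False that[of q11 1 "q12 / q11"] by simp
qed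

lemma binary_cubic_rank_one:
  fixes c1 c2 c3 c4 :: "'a::field"
  assumes "c1 * c3 = c2^2" "c1 * c4 = c2 * c3" "c2 * c4 = c3^2"
  obtains n1 n2 g where "(n1, n2) \<noteq> (0, 0)"
    "c1 = g * n1^3" "c2 = g * n1^2 * n2" "c3 = g * n1 * n2^2" "c4 = g * n2^3"
proof (cases "c1 = 0")
  case True
  with assms have "c2 = 0" by simp
  with assms have "c3 = 0" by simp
  with \<open>c1 = 0\<close> \<open>c2 = 0\<close> show ?thesis using that[of 0 1 c4] by simp
next
  case False
  define t where "t = c2 / c1"
  have "c2 = c1 * t" using False by (simp add: t_def)
  moreover have "c3 = c1 * t^2" using assms(1) False \<open>c2 = c1 * t\<close>
    by (simp add: field_simps power2_eq_square)
  moreover have "c4 = c1 * t^3" using assms(2) False \<open>c2 = c1 * t\<close> \<open>c3 = c1 * t^2\<close>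
    by (simp add: field_simps power2_eq_square power3_eq_cube)
  ultimately show ?thesis using that[of 1 t c1] by (simp add: mult_ac)
qed

text \<open>For q = l m^2 and a cube g n^3 the two apolarity conditions read
  g l n_i (n1 m2 - n2 m1)^2 = 0, so q and the cube are powers of a common linear form.\<close>

lemma apolar_rank_one_common_form:
  fixes q11 q12 q22 c1 c2 c3 c4 :: "'a::field"
  assumes q: "q11 * q22 = q12^2"
    and apolar: "c1 * q22 - 2 * c2 * q12 + c3 * q11 = 0" "c2 * q22 - 2 * c3 * q12 + c4 * q11 = 0"
    and c: "c1 * c3 = c2^2" "c1 * c4 = c2 * c3" "c2 * c4 = c3^2"
  obtains n1 n2 l g where "q11 = l * n1^2" "q12 = l * n1 * n2" "q22 = l * n2^2"
    "c1 = g * n1^3" "c2 = g * n1^2 * n2" "c3 = g * n1 * n2^2" "c4 = g * n2^3"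
proof -
  obtain m1 m2 l where m: "q11 = l * m1^2" "q12 = l * m1 * m2" "q22 = l * m2^2"
    using binary_quadric_rank_one[OF q] by blast
  obtain n1 n2 g where n: "(n1, n2) \<noteq> (0, 0)"
    "c1 = g * n1^3" "c2 = g * n1^2 * n2" "c3 = g * n1 * n2^2" "c4 = g * n2^3"
    using binary_cubic_rank_one[OF c] by blast
  have "g * l * n1 * (n1 * m2 - n2 * m1)^2 = 0" "g * l * n2 * (n1 * m2 - n2 * m1)^2 = 0"
    using apolar unfolding m n(2-5) by (simp_all add: algebra_simps power2_eq_square power3_eq_cube)
  with n(1) have "g = 0 \<or> l = 0 \<or> n1 * m2 = n2 * m1" by auto
  then consider "g = 0" | "l = 0" | "n1 * m2 = n2 * m1" by blast
  then show ?thesis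
  proof cases
    case 1
    then show ?thesis using m n that[of l m1 m2 0] by simp
  next
    case 2
    then show ?thesis using m n that[of 0 n1 n2 g] by simp
  next
    case 3
    obtain k where "m1 = k * n1" "m2 = k * n2"
    proof (cases "n1 = 0")
      case True
      then show ?thesis using n(1) 3 that[of "m2 / n2"] by simp
    next
      case False
      then show ?thesis using 3 that[of "m1 / n1"] by (simp add: field_simps)
    qed
    then show ?thesis using m n that[of "l * k^2" n1 n2 g] by (simp add: power2_eq_square mult_ac)
  qed
qed

lemma adapted_coordinates:
  assumes "p$3 \<noteq> 0"
  shows "\<exists>e1 e2 z. \<forall>x. x = lin e1 x *s (axis 1 1 - \<alpha> *s p) + lin e2 x *s (axis 2 1 - \<beta> *s p) + lin z x *s p"
proof (intro exI allI)
  fix x :: "complex^3"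
  let ?e1 = "\<chi> i::3. if i = 1 then 1 else if i = 2 then 0 else - p$1 / p$3"
  let ?e2 = "\<chi> i::3. if i = 1 then 0 else if i = 2 then 1 else - p$2 / p$3"
  let ?z = "\<chi> i::3. if i = 1 then \<alpha> else if i = 2 then \<beta> else (1 - \<alpha> * p$1 - \<beta> * p$2) / p$3"
  show "x = lin ?e1 x *s (axis 1 1 - \<alpha> *s p) + lin ?e2 x *s (axis 2 1 - \<beta> *s p) + lin ?z x *s p"
    using assms by (simp add: vec_eq_iff forall_3 lin_def sum_3 axis_def field_simps)
qed

lemma Hessian_zero_normal_form:
  assumes sym: "sym3 T" and p3: "p$3 \<noteq> 0" and c: "form3 T p p p \<noteq> 0"
    and hess: "\<And>x. det (\<chi> i j. contract T x i j) = 0"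
  obtains z n l g where
    "\<And>x. form3 T x x x = form3 T p p p * (lin z x)^3 + l * lin z x * (lin n x)^2 + g * (lin n x)^3"
proof -
  define \<alpha> where "\<alpha> = form3 T p p (axis 1 1) / form3 T p p p"
  define \<beta> where "\<beta> = form3 T p p (axis 2 1) / form3 T p p p"
  define b1 where "b1 = axis 1 1 - \<alpha> *s p"
  define b2 where "b2 = axis 2 1 - \<beta> *s p"
  have "form3 T p p (x - s *s p) = form3 T p p x - s * form3 T p p p" for x s
    by (simp add: form3_def algebra_simps sum_subtractf sum_distrib_left)
  then have "form3 T p p b1 = 0" "form3 T p p b2 = 0"
    using c by (simp_all add: b1_def b2_def \<alpha>_def \<beta>_def)
  then have apolar: "form3 T b1 p p = 0" "form3 T b2 p p = 0"
    using form3_swap12[OF sym] form3_swap23[OF sym] by metis+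
  let ?q11 = "form3 T b1 b1 p" and ?q12 = "form3 T b1 b2 p" and ?q22 = "form3 T b2 b2 p"
    and ?c1 = "form3 T b1 b1 b1" and ?c2 = "form3 T b1 b1 b2" and ?c3 = "form3 T b1 b2 b2"
    and ?c4 = "form3 T b2 b2 b2"
  define bb :: "3 \<Rightarrow> complex^3" where "bb = (\<lambda>i. if i = 1 then b1 else if i = 2 then b2 else p)"
  have "adapted_hess_det (form3 T p p p) ?q11 ?q12 ?q22 ?c1 ?c2 ?c3 ?c4 y1 y2 z = 0" for y1 y2 z
  proof -
    have "adapted_hess_det (form3 T p p p) ?q11 ?q12 ?q22 ?c1 ?c2 ?c3 ?c4 y1 y2 z
        = det (\<chi> i j. form3 T (bb i) (bb j) (y1 *s b1 + y2 *s b2 + z *s p))"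
      by (rule det_adapted_hess[OF sym apolar bb_def, symmetric])
    also have "\<dots> = 0"
      by (simp only: det_form3_change_basis hess mult_zero_right)
    finally show ?thesis .
  qed
  note eqs = adapted_hess_det_eq_0_imp[OF c this]
  obtain n1 n2 l g where nf: "?q11 = l * n1^2" "?q12 = l * n1 * n2" "?q22 = l * n2^2"
    "?c1 = g * n1^3" "?c2 = g * n1^2 * n2" "?c3 = g * n1 * n2^2" "?c4 = g * n2^3"
    by (rule apolar_rank_one_common_form[OF eqs])
  obtain e1 e2 z where x: "\<And>x. x = lin e1 x *s b1 + lin e2 x *s b2 + lin z x *s p"
    using adapted_coordinates[OF p3] unfolding b1_def b2_def by blast
  have "form3 T x x x = form3 T p p p * (lin z x)^3 + (3 * l) * lin z x * (lin (n1 *s e1 + n2 *s e2) x)^2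
      + g * (lin (n1 *s e1 + n2 *s e2) x)^3" for x
  proof -
    let ?w = "lin e1 x *s b1 + lin e2 x *s b2 + lin z x *s p"
    have "form3 T x x x = form3 T ?w ?w ?w"
      by (rule arg_cong[where f = "\<lambda>v. form3 T v v v", OF x])
    then show ?thesis
      unfolding form3_adapted[OF sym apolar] nf
      by (simp add: lin_add lin_scale algebra_simps power2_eq_square power3_eq_cube)
  qed
  then show ?thesis using that by blast
qed

section \<open>Binary cubics with nonzero discriminant\<close>

lemma depressed_cubic_roots:
  fixes c g2 g3 :: complex
  assumes c: "c \<noteq> 0"
  obtains r1 r2 r3 where "r1 + r2 + r3 = 0" "g2 = c * (r1 * r2 + r1 * r3 + r2 * r3)" "g3 = - c * r1 * r2 * r3"
proof -
  have "\<exists>r. poly [:g3, g2, 0, c:] r = 0"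
    by (rule alg_closed_imp_poly_has_root) (use c in simp)
  then obtain r1 where r1: "g3 = - (c * r1^3 + g2 * r1)"
    by (auto simp: algebra_simps power3_eq_cube eq_neg_iff_add_eq_0)
  define s where "s = csqrt (-3 * r1^2 - 4 * g2 / c)"
  define r2 where "r2 = (- r1 + s) / 2"
  define r3 where "r3 = (- r1 - s) / 2"
  have sum: "r1 + r2 + r3 = 0" by (simp add: r2_def r3_def field_simps)
  have "r2 * r3 = (r1^2 - s^2) / 4" by (simp add: r2_def r3_def field_simps power2_eq_square)
  also have "\<dots> = r1^2 + g2 / c" by (simp add: s_def field_simps)
  finally have "r2 * r3 = r1^2 + g2 / c" .
  then have prod: "c * (r2 * r3) = c * r1^2 + g2" using c by (simp add: field_simps)
  have "r2 + r3 = - r1" using sum by (simp add: eq_neg_iff_add_eq_0 algebra_simps)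
  have "c * (r1 * r2 + r1 * r3 + r2 * r3) = c * r1 * (r2 + r3) + c * (r2 * r3)"
    by (simp add: algebra_simps)
  also have "\<dots> = g2"
    using prod \<open>r2 + r3 = - r1\<close> by (simp add: power2_eq_square)
  finally have "g2 = c * (r1 * r2 + r1 * r3 + r2 * r3)" ..
  moreover have "- c * r1 * r2 * r3 = - r1 * (c * (r2 * r3))" by (simp add: algebra_simps)
  then have "g3 = - c * r1 * r2 * r3"
    using prod r1 by (simp add: algebra_simps power2_eq_square power3_eq_cube)
  ultimately show ?thesis using that sum by blast
qed

lemma cubic_disc_roots:
  fixes c r1 r2 r3 :: "'a::comm_ring_1"
  assumes "r1 + r2 + r3 = 0"
  shows "cubic_disc c 0 (c * (r1 * r2 + r1 * r3 + r2 * r3)) (- c * r1 * r2 * r3) =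
    c^4 * (r1 - r2)^2 * (r1 - r3)^2 * (r2 - r3)^2"
proof -
  have r3: "r3 = - r1 - r2" using assms by (simp add: algebra_simps eq_neg_iff_add_eq_0)
  show ?thesis
    unfolding r3 cubic_disc_def by (simp add: algebra_simps power2_eq_square power3_eq_cube eval_nat_numeral)
qed

lemma binary_cubic_nonzero_disc_concurrent:
  assumes c: "c \<noteq> 0" and ind: "lin_indep2 z n" and disc: "cubic_disc c 0 g2 g3 \<noteq> 0"
    and f: "\<And>x. f x = c * (lin z x)^3 + g2 * lin z x * (lin n x)^2 + g3 * (lin n x)^3"
  shows "product_of_concurrent_lines f"
proof -
  obtain r1 r2 r3 where sum: "r1 + r2 + r3 = 0"
    and g2: "g2 = c * (r1 * r2 + r1 * r3 + r2 * r3)" and g3: "g3 = - c * r1 * r2 * r3"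
    using depressed_cubic_roots[OF c] by blast
  have "r1 \<noteq> r2" "r1 \<noteq> r3" "r2 \<noteq> r3"
    using disc unfolding g2 g3 cubic_disc_roots[OF sum] by auto
  then have "concurrent (c *s z + (- c * r1) *s n) (1 *s z + (- r2) *s n) (1 *s z + (- r3) *s n)"
    using c by (intro concurrent_in_span2[OF ind]) (simp_all add: algebra_simps)
  moreover have "f = (\<lambda>x. lin (c *s z + (- c * r1) *s n) x * lin (1 *s z + (- r2) *s n) x
      * lin (1 *s z + (- r3) *s n) x)"
  proof
    fix x
    have "lin (c *s z + (- c * r1) *s n) x * lin (1 *s z + (- r2) *s n) x * lin (1 *s z + (- r3) *s n) x
        = c * (lin z x - r1 * lin n x) * (lin z x - r2 * lin n x) * (lin z x - r3 * lin n x)"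
      unfolding lin_add lin_scale by (simp add: algebra_simps)
    also have "\<dots> = c * (lin z x)^3 - c * (r1 + r2 + r3) * (lin z x)^2 * lin n x
        + c * (r1 * r2 + r1 * r3 + r2 * r3) * lin z x * (lin n x)^2 - c * r1 * r2 * r3 * (lin n x)^3"
      by (simp add: algebra_simps power2_eq_square power3_eq_cube)
    also have "\<dots> = f x" by (simp add: f sum g2 g3)
    finally show "f x = lin (c *s z + (- c * r1) *s n) x * lin (1 *s z + (- r2) *s n) x
        * lin (1 *s z + (- r3) *s n) x" by simp
  qed
  ultimately show ?thesis
    unfolding product_of_concurrent_lines_def by blast
qed

lemma sum_of_two_cubes_covariants:
  assumes "sum_of_two_cubes f"
  shows "Hessian f = (\<lambda>x. 0)" and "\<exists>u x. F6u f u x \<noteq> 0"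
proof -
  obtain a0 b0 a b where a0: "a0 \<noteq> 0" and b0: "b0 \<noteq> 0" and ind: "lin_indep2 a b"
    and f: "f = (\<lambda>x. a0 * (lin a x)^3 + b0 * (lin b x)^3)"
    using assms unfolding sum_of_two_cubes_def by blast
  have T: "f x = form3 (binary_cubic_tensor a0 0 0 b0 a b) x x x" for x
    by (simp add: f form3_binary_cubic_tensor)
  show "Hessian f = (\<lambda>x. 0)"
    using Hessian_binary_cubic[OF T] by (simp add: fun_eq_iff)
  obtain u where "det3 a b u \<noteq> 0"
    using lin_indep2_imp_det3_nonzero[OF ind] by blast
  then have "F6u f u 0 \<noteq> 0"
    unfolding F6u_binary_cubic[OF T] cubic_disc_def using a0 b0 by simp
  then show "\<exists>u x. F6u f u x \<noteq> 0" by blast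
qed

lemma Hessian_zero_F6u_nonzero_imp_product_of_concurrent_lines:
  assumes "ternary_cubic f" and hess: "Hessian f = (\<lambda>x. 0)" and F: "F6u f u x0 \<noteq> 0"
  shows "product_of_concurrent_lines f"
proof -
  obtain T where sym: "sym3 T" and fT: "\<And>x. f x = form3 T x x x"
    using ternary_cubic_imp_sym_tensor[OF assms(1)] by blast
  have "det (\<chi> i j. contract T x i j) = 0" for x
    using fun_cong[OF hess, of x] unfolding Hessian_form3[OF sym fT] mixed_det_diag by simp
  note hess_det = this
  have "\<exists>p0. form3 T p0 p0 p0 \<noteq> 0"
  proof (rule ccontr)
    assume "\<nexists>p0. form3 T p0 p0 p0 \<noteq> 0"
    then have "f x = form3 (binary_cubic_tensor 0 0 0 0 u u) x x x" for x
      by (simp add: fT form3_binary_cubic_tensor)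
    then show False using F F6u_binary_cubic[of f 0 0 0 0 u u] by (simp add: cubic_disc_def)
  qed
  then obtain p where p3: "p$3 \<noteq> 0" and c: "form3 T p p p \<noteq> 0"
    using form3_nonzero_off_plane[OF sym] by blast
  obtain z n l g where nf:
    "\<And>x. form3 T x x x = form3 T p p p * (lin z x)^3 + l * lin z x * (lin n x)^2 + g * (lin n x)^3"
    by (rule Hessian_zero_normal_form[OF sym p3 c hess_det]) blast
  have f_nf: "f x = form3 T p p p * (lin z x)^3 + l * lin z x * (lin n x)^2 + g * (lin n x)^3" for x
    unfolding fT by (rule nf)
  have "f x = form3 (binary_cubic_tensor (form3 T p p p) 0 l g z n) x x x" for x
    by (simp add: f_nf form3_binary_cubic_tensor)
  from F[unfolded F6u_binary_cubic[OF this]]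
  have "det3 z n u \<noteq> 0" and "cubic_disc (form3 T p p p) 0 l g \<noteq> 0" by auto
  then show ?thesis
    using binary_cubic_nonzero_disc_concurrent[OF c det3_nonzero_imp_lin_indep2 _ f_nf] by blast
qed

theorem lemma7p3:
  fixes f :: "complex^3 \<Rightarrow> complex"
  assumes "ternary_cubic f"
  shows "((Hessian f = (\<lambda>x. 0) \<and> (\<exists>u x. F6u f u x \<noteq> 0))
          \<longleftrightarrow> (\<exists>a0 b0 a b. a0 \<noteq> 0 \<and> b0 \<noteq> 0 \<and> lin_indep2 a b \<and>
                 f = (\<lambda>x. a0 * (lin a x)^3 + b0 * (lin b x)^3)))
       \<and> ((\<exists>a0 b0 a b. a0 \<noteq> 0 \<and> b0 \<noteq> 0 \<and> lin_indep2 a b \<and>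
                 f = (\<lambda>x. a0 * (lin a x)^3 + b0 * (lin b x)^3))
          \<longleftrightarrow> (\<exists>a b c. lin_dep3 a b c \<and> lin_indep2 a b \<and> lin_indep2 a c \<and> lin_indep2 b c \<and>
                 f = (\<lambda>x. lin a x * lin b x * lin c x)))"
proof -
  have two_three: "sum_of_two_cubes f \<longleftrightarrow> product_of_concurrent_lines f"
    using sum_of_two_cubes_imp_product_of_concurrent_lines
      product_of_concurrent_lines_imp_sum_of_two_cubes by blast
  have "(Hessian f = (\<lambda>x. 0) \<and> (\<exists>u x. F6u f u x \<noteq> 0)) \<longleftrightarrow> sum_of_two_cubes f"
    using sum_of_two_cubes_covariants two_three assms
      Hessian_zero_F6u_nonzero_imp_product_of_concurrent_lines by blast
  from this two_three show ?thesis
    unfolding sum_of_two_cubes_def product_of_concurrent_lines_def concurrent_def conj_assoc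
    by (rule conjI)
qed

end
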